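(* Let $(G=(V,E),k,p)$ be an instance of Max $(k,n-k)$-Cut, write $V=\{v_1,\dots,v_{|V|}\}$, and let $\mathcal{F}$ be a $(|V|,k+p)$-universal set. For each $f\in\mathcal{F}$ let $G_f$ be a copy of $G$ in which the copy of $v_i$ is colored red if $f(i)=0$ and blue if $f(i)=1$. Then $(G,k,p)$ is a yes-instance of Max $(k,n-k)$-Cut if and only if at least one of the instances $(G_f,k,p)$, $f\in\mathcal{F}$, is a yes-instance of NC-Max $(k,n-k)$-Cut.
   Context: Graphs are finite, simple and undirected; $E(X,V\setminus X)$ denotes the set of edges with exactly one endpoint in $X$. Max $(k,n-k)$-Cut: given $G=(V,E)$ and positive integers $k,p$, decide whether there is $X\subseteq V$ with $|X|=k$ and $|E(X,V\setminus X)|\ge p$. NC-Max $(k,n-k)$-Cut: given a graph $G=(V,E)$ each of whose nodes is colored red or blue, and positive integers $k,p$, decide whether there is $X\subseteq V$ consisting of exactly $k$ red nodes and no blue nodes such that at least $p$ edges of $E(X,V\setminus X)$ have a blue endpoint. A set $\mathcal{F}$ of functions $\{1,\dots,n\}\to\{0,1\}$ is an $(n,t)$-universal set if for every $I\subseteq\{1,\dots,n\}$ with $|I|\le t$ and every $f':I\to\{0,1\}$ there is $f\in\mathcal{F}$ with $f(i)=f'(i)$ for all $i\in I$. *)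

theory Defs
  imports Main
begin

definition simple_graph :: "'a set \<Rightarrow> 'a set set \<Rightarrow> bool" where
  "simple_graph V E \<longleftrightarrow> finite V \<and>
     (\<forall>e\<in>E. \<exists>u v. u \<in> V \<and> v \<in> V \<and> u \<noteq> v \<and> e = {u, v})"

definition cut_edges :: "'a set set \<Rightarrow> 'a set \<Rightarrow> 'a set set" where
  "cut_edges E X = {e \<in> E. card (e \<inter> X) = 1}"

definition max_kcut :: "'a set \<Rightarrow> 'a set set \<Rightarrow> nat \<Rightarrow> nat \<Rightarrow> bool" where
  "max_kcut V E k p \<longleftrightarrow> (\<exists>X. X \<subseteq> V \<and> card X = k \<and> card (cut_edges E X) \<ge> p)"

(* NC-Max (k,n-k)-Cut yes-instance; blue x = True means x is blue, otherwise red *)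
definition nc_max_kcut :: "'a set \<Rightarrow> 'a set set \<Rightarrow> ('a \<Rightarrow> bool) \<Rightarrow> nat \<Rightarrow> nat \<Rightarrow> bool" where
  "nc_max_kcut V E blue k p \<longleftrightarrow>
     (\<exists>X. X \<subseteq> V \<and> card X = k \<and> (\<forall>x\<in>X. \<not> blue x) \<and>
          card {e \<in> cut_edges E X. \<exists>b\<in>e. blue b} \<ge> p)"

(* (n,t)-universal set of functions {1..n} -> {0,1}; value True encodes 1, False encodes 0 *)
definition universal_set :: "nat \<Rightarrow> nat \<Rightarrow> (nat \<Rightarrow> bool) set \<Rightarrow> bool" where
  "universal_set n t F \<longleftrightarrow>
     (\<forall>I f'. I \<subseteq> {1..n} \<and> card I \<le> t \<longrightarrow> (\<exists>f\<in>F. \<forall>i\<in>I. f i = f' i))"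

end

theory Submission
  imports Defs
begin

text \<open>A solution X of Max (k,n-k)-Cut with at least p cut edges can be certified by p of those
  edges; each has exactly one endpoint outside X. Colouring X red and these at most p outer
  endpoints blue turns X into a solution of NC-Max (k,n-k)-Cut, and this colouring is only
  constrained on at most k + p vertices, so a (n, k+p)-universal set realises it. Conversely,
  every NC-solution is a cut solution, since counting only cut edges with a blue endpoint can
  only decrease the count.\<close>

lemma simple_graph_edges_subset: "simple_graph V E \<Longrightarrow> E \<subseteq> Pow V"
  unfolding simple_graph_def by auto

lemma simple_graph_finite_edges: "simple_graph V E \<Longrightarrow> finite E"
  using simple_graph_edges_subset finite_subset finite_Pow_iff unfolding simple_graph_def by metis

lemma finite_cut_edges: "finite E \<Longrightarrow> finite (cut_edges E X)"
  unfolding cut_edges_def by simp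

lemma cut_edge_Diff_singleton:
  assumes "simple_graph V E" "e \<in> cut_edges E X"
  obtains y where "e - X = {y}"
proof -
  obtain u w where e: "e = {u, w}" "u \<noteq> w"
    using assms unfolding simple_graph_def cut_edges_def by blast
  have "card (e \<inter> X) = 1" using assms(2) unfolding cut_edges_def by simp
  then have "(u \<in> X) \<noteq> (w \<in> X)"
    using e by (cases "u \<in> X"; cases "w \<in> X") (auto simp: Int_insert_left)
  then show ?thesis using that e by (cases "u \<in> X") auto
qed

lemma nc_max_kcut_imp_max_kcut:
  assumes "finite E" "nc_max_kcut V E blue k p"
  shows "max_kcut V E k p"
proof -
  obtain X where X: "X \<subseteq> V" "card X = k" "card {e \<in> cut_edges E X. \<exists>b\<in>e. blue b} \<ge> p"
    using assms(2) unfolding nc_max_kcut_def by blast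
  have "card {e \<in> cut_edges E X. \<exists>b\<in>e. blue b} \<le> card (cut_edges E X)"
    by (rule card_mono[OF finite_cut_edges[OF assms(1)]]) auto
  with X show ?thesis unfolding max_kcut_def by auto
qed

lemma max_kcut_small_colouring_witness:
  assumes "simple_graph V E" "max_kcut V E k p"
  obtains Y X where "Y \<subseteq> V" "card Y \<le> k + p"
    "\<And>blue. \<forall>y\<in>Y. blue y \<longleftrightarrow> y \<notin> X \<Longrightarrow> nc_max_kcut V E blue k p"
proof -
  have finE: "finite E" using simple_graph_finite_edges[OF assms(1)] .
  obtain X where X: "X \<subseteq> V" "card X = k" "card (cut_edges E X) \<ge> p"
    using assms(2) unfolding max_kcut_def by blast
  obtain C where C: "C \<subseteq> cut_edges E X" "card C = p"
    using X(3) obtain_subset_with_card_n by metis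
  have finC: "finite C" using C(1) finite_cut_edges[OF finE] finite_subset by blast
  have outer: "\<exists>y. e - X = {y}" if "e \<in> C" for e
    using cut_edge_Diff_singleton[OF assms(1)] C(1) that by blast
  define Y where "Y = X \<union> (\<Union>e\<in>C. e - X)"
  have "card (\<Union>e\<in>C. e - X) \<le> (\<Sum>e\<in>C. card (e - X))"
    using card_UN_le[OF finC] .
  also have "\<dots> = (\<Sum>e\<in>C. 1)"
  proof (rule sum.cong)
    show "card (e - X) = 1" if "e \<in> C" for e
      using outer[OF that] by force
  qed simp
  also have "\<dots> = p" using C(2) by simp
  finally have "card Y \<le> k + p"
    unfolding Y_def using card_Un_le[of X "\<Union>e\<in>C. e - X"] X(2) by linarith
  moreover have "Y \<subseteq> V"
    unfolding Y_def using X(1) C(1) simple_graph_edges_subset[OF assms(1)]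
    unfolding cut_edges_def by blast
  moreover have "nc_max_kcut V E blue k p" if blue: "\<forall>y\<in>Y. blue y \<longleftrightarrow> y \<notin> X" for blue
  proof -
    have C_blue: "C \<subseteq> {e \<in> cut_edges E X. \<exists>b\<in>e. blue b}"
    proof
      fix e assume "e \<in> C"
      moreover obtain y where "e - X = {y}" using outer[OF \<open>e \<in> C\<close>] by blast
      ultimately show "e \<in> {e \<in> cut_edges E X. \<exists>b\<in>e. blue b}"
        using C(1) blue unfolding Y_def by blast
    qed
    have "p \<le> card {e \<in> cut_edges E X. \<exists>b\<in>e. blue b}"
      using card_mono[OF _ C_blue] finite_cut_edges[OF finE] C(2) by simp
    moreover have "\<forall>x\<in>X. \<not> blue x" using blue unfolding Y_def by blast
    ultimately show ?thesis using X(1,2) unfolding nc_max_kcut_def by blast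
  qed
  ultimately show ?thesis using that by blast
qed

lemma universal_set_realises_colouring:
  assumes "universal_set n t F" "bij_betw v {1..n} V" "Y \<subseteq> V" "card Y \<le> t"
  obtains f where "f \<in> F" "\<forall>y\<in>Y. f (inv_into {1..n} v y) = c y"
proof -
  let ?I = "inv_into {1..n} v ` Y"
  have inj: "inj_on (inv_into {1..n} v) Y"
    using assms(3) bij_betw_inv_into[OF assms(2)] inj_on_subset bij_betw_imp_inj_on by metis
  have "?I \<subseteq> {1..n}"
    using assms(2,3) inv_into_into unfolding bij_betw_def by (metis image_subset_iff subset_iff)
  moreover have "card ?I \<le> t" using card_image[OF inj] assms(4) by simp
  ultimately obtain f where "f \<in> F" "\<forall>i\<in>?I. f i = c (v i)"
    using assms(1) unfolding universal_set_def by (elim allE[of _ ?I] allE[of _ "c \<circ> v"]) auto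
  moreover have "v (inv_into {1..n} v y) = y" if "y \<in> Y" for y
    using assms(2,3) that f_inv_into_f unfolding bij_betw_def by (metis subset_iff)
  ultimately show ?thesis using that by auto
qed

theorem lemma7:
  fixes V :: "'a set" and E :: "'a set set" and v :: "nat \<Rightarrow> 'a"
    and F :: "(nat \<Rightarrow> bool) set" and k p :: nat
  assumes "simple_graph V E"
    and "bij_betw v {1..card V} V"
    and "universal_set (card V) (k + p) F"
    and "k > 0" and "p > 0"
  shows "max_kcut V E k p \<longleftrightarrow>
         (\<exists>f\<in>F. nc_max_kcut V E (\<lambda>x. f (inv_into {1..card V} v x)) k p)"
proof
  assume "max_kcut V E k p"
  then obtain Y X where "Y \<subseteq> V" "card Y \<le> k + p"
    and witness: "\<And>blue. \<forall>y\<in>Y. blue y \<longleftrightarrow> y \<notin> X \<Longrightarrow> nc_max_kcut V E blue k p"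
    by (rule max_kcut_small_colouring_witness[OF assms(1)]) (rule that)
  obtain f where "f \<in> F" and colouring: "\<forall>y\<in>Y. f (inv_into {1..card V} v y) = (y \<notin> X)"
    by (rule universal_set_realises_colouring[OF assms(3,2) \<open>Y \<subseteq> V\<close> \<open>card Y \<le> k + p\<close>])
  have "nc_max_kcut V E (\<lambda>x. f (inv_into {1..card V} v x)) k p"
    using witness colouring by simp
  with \<open>f \<in> F\<close> show "\<exists>f\<in>F. nc_max_kcut V E (\<lambda>x. f (inv_into {1..card V} v x)) k p"
    by auto
next
  assume "\<exists>f\<in>F. nc_max_kcut V E (\<lambda>x. f (inv_into {1..card V} v x)) k p"
  then obtain f where "nc_max_kcut V E (\<lambda>x. f (inv_into {1..card V} v x)) k p" ..
  then show "max_kcut V E k p"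
    by (rule nc_max_kcut_imp_max_kcut[OF simple_graph_finite_edges[OF assms(1)]])
qed

end
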